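(* Let $A\in\mathbb{R}^{m\times n}$, $K\in\{0,\ldots,\min\{m,n\}-1\}$, $\gamma>0$, and let $X^*$ be a d-stationary point of $$\min_{X\in\mathbb{R}^{m\times n}}\ \|A-X\|_1+\gamma\mathcal{T}_K(X),$$ where $\|Y\|_1=\sum_{i,j}|Y_{i,j}|$. If $\gamma>\sqrt{mn}$, then $\mathcal{T}_K(X^* )=0$, i.e., $\mathrm{rank}(X^* )\le K$.
   Context: $\mathcal{T}_K(X)=\sum_{i=K+1}^{\min\{m,n\}}\sigma_i(X)$, with $\sigma_i(X)$ the $i$-th largest singular value. A point is d-stationary if the directional derivative of the objective there is $\ge0$ in every direction. *)

theory Defs
  imports "Jordan_Normal_Form.Char_Poly" "HOL-Computational_Algebra.Polynomial"
begin

definition gram_eigs_desc :: "real mat \<Rightarrow> real list" where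
  "gram_eigs_desc X = rev (sorted_list_of_multiset (proots (char_poly (transpose_mat X * X))))"

text \<open>i-th largest singular value (1-indexed): square root of the i-th largest eigenvalue of X^T X.\<close>
definition sing_val :: "real mat \<Rightarrow> nat \<Rightarrow> real" where
  "sing_val X i = sqrt (gram_eigs_desc X ! (i - 1))"

definition trunc_nuc :: "nat \<Rightarrow> real mat \<Rightarrow> real" where
  "trunc_nuc K X = (\<Sum>i = K + 1 .. min (dim_row X) (dim_col X). sing_val X i)"

definition l1_norm_mat :: "real mat \<Rightarrow> real" where
  "l1_norm_mat Y = (\<Sum>i < dim_row Y. \<Sum>j < dim_col Y. \<bar>Y $$ (i, j)\<bar>)"

definition obj :: "real mat \<Rightarrow> nat \<Rightarrow> real \<Rightarrow> real mat \<Rightarrow> real" where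
  "obj A K \<gamma> X = l1_norm_mat (A - X) + \<gamma> * trunc_nuc K X"

definition d_stationary :: "nat \<Rightarrow> nat \<Rightarrow> (real mat \<Rightarrow> real) \<Rightarrow> real mat \<Rightarrow> bool" where
  "d_stationary m n F X \<longleftrightarrow> X \<in> carrier_mat m n \<and>
     (\<forall>D \<in> carrier_mat m n. \<exists>L. L \<ge> 0 \<and>
        ((\<lambda>t. (F (X + t \<cdot>\<^sub>m D) - F X) / t) \<longlongrightarrow> L) (at_right 0))"

end

theory Submission
  imports Defs "Jordan_Normal_Form.Schur_Decomposition"
begin

(* Write X\<^sup>T X = V diag(\<mu>) V\<^sup>T with V orthogonal and \<mu> decreasing, so that \<sigma>\<^sub>i(X) = sqrt \<mu>\<^sub>i,
  and let Y = X V; its columns are orthogonal with squared norms \<mu>\<^sub>i. Damping the columns of Y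
  beyond the K-th by the factor 1 - t gives X + t D, where D = - Y P V\<^sup>T for the coordinate
  projection P onto the tail; its singular values are those of X, the ones beyond the K-th
  multiplied by 1 - t, so T\<^sub>K(X + t D) = (1 - t) T\<^sub>K(X). As \<mu>\<^sub>i = 0 for i \<ge> m, the squared Frobenius norm of D
  is the sum of the tail eigenvalues, at most T\<^sub>K(X)\<^sup>2, hence \<parallel>D\<parallel>\<^sub>1 \<le> sqrt(m n) T\<^sub>K(X) by
  Cauchy-Schwarz. Along D the objective therefore decreases at rate at least (\<gamma> - sqrt(m n)) T\<^sub>K(X),
  which d-stationarity forbids unless T\<^sub>K(X) = 0. *)

lemma index_mult_mat_sum:
  assumes "A \<in> carrier_mat nr n" "B \<in> carrier_mat n nc" "i < nr" "j < nc"
  shows "(A * B) $$ (i, j) = (\<Sum>l<n. A $$ (i, l) * B $$ (l, j))"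
  using assms by (auto simp: scalar_prod_def lessThan_atLeast0 intro!: sum.cong)

lemma index_mult_mat_diag_mult:
  assumes M: "M \<in> carrier_mat nr n" and N: "N \<in> carrier_mat n nc" and "i < nr" "j < nc"
  shows "(M * mat_diag n f * N) $$ (i, j) = (\<Sum>l<n. M $$ (i, l) * f l * N $$ (l, j))"
proof -
  have "M * mat_diag n f \<in> carrier_mat nr n" using M by simp
  then have "(M * mat_diag n f * N) $$ (i, j) = (\<Sum>l<n. (M * mat_diag n f) $$ (i, l) * N $$ (l, j))"
    using assms by (intro index_mult_mat_sum)
  then show ?thesis
    using assms by (simp add: mat_diag_mult_right[OF M])
qed

lemma dim_mat_diag [simp]: "dim_row (mat_diag n f) = n" "dim_col (mat_diag n f) = n"
  by (simp_all add: mat_diag_def)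

lemma transpose_mat_diag [simp]: "transpose_mat (mat_diag n f) = mat_diag n f"
  by (rule eq_matI) (auto simp: mat_diag_def)

lemma index_transpose_eq:
  assumes "transpose_mat A = A" "A \<in> carrier_mat n n" "i < n" "j < n"
  shows "A $$ (j, i) = A $$ (i, j)"
  using arg_cong[OF assms(1), of "\<lambda>M. M $$ (i, j)"] assms(2-) by simp

lemma transpose_congruence_symmetric:
  fixes A W :: "'a :: comm_semiring_1 mat"
  assumes A: "A \<in> carrier_mat n n" and sym: "transpose_mat A = A" and W: "W \<in> carrier_mat n n"
  shows "transpose_mat (transpose_mat W * A * W) = transpose_mat W * A * W"
proof -
  have "transpose_mat (transpose_mat W * A * W) = transpose_mat W * transpose_mat (transpose_mat W * A)"
    by (rule transpose_mult) (use A W in auto)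
  also have "\<dots> = transpose_mat W * A * W"
    using A W sym by (simp add: transpose_mult[of _ n n A] assoc_mult_mat[of _ n n _ n _ n])
  finally show ?thesis .
qed

lemma gram_congruence:
  fixes Y F V :: "'a :: comm_semiring_1 mat"
  assumes Y: "Y \<in> carrier_mat m n" and F: "F \<in> carrier_mat n n" and V: "V \<in> carrier_mat n n"
  shows "transpose_mat (Y * F * transpose_mat V) * (Y * F * transpose_mat V)
         = V * (transpose_mat F * (transpose_mat Y * Y) * F) * transpose_mat V"
proof -
  have VT: "transpose_mat V \<in> carrier_mat n n" and FT: "transpose_mat F \<in> carrier_mat n n"
    and YT: "transpose_mat Y \<in> carrier_mat n m" and YF: "Y * F \<in> carrier_mat m n"
    and YTY: "transpose_mat Y * Y \<in> carrier_mat n n"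
    using Y F V by auto
  have M: "Y * F * transpose_mat V \<in> carrier_mat m n"
    using YF VT by simp
  have FTYT: "transpose_mat F * transpose_mat Y \<in> carrier_mat n m"
    using FT YT by simp
  have "transpose_mat (Y * F * transpose_mat V) = V * (transpose_mat F * transpose_mat Y)"
    using transpose_mult[OF YF VT] transpose_mult[OF Y F] by simp
  then have "transpose_mat (Y * F * transpose_mat V) * (Y * F * transpose_mat V)
      = V * ((transpose_mat F * transpose_mat Y) * (Y * F * transpose_mat V))"
    using assoc_mult_mat[OF V FTYT M] by simp
  also have "(transpose_mat F * transpose_mat Y) * (Y * F * transpose_mat V)
      = ((transpose_mat F * transpose_mat Y) * (Y * F)) * transpose_mat V"
    using assoc_mult_mat[OF FTYT YF VT] by simp
  also have "(transpose_mat F * transpose_mat Y) * (Y * F) = transpose_mat F * (transpose_mat Y * Y) * F"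
    using assoc_mult_mat[OF FT YT YF] assoc_mult_mat[OF YT Y F] assoc_mult_mat[OF FT YTY F] by simp
  also have "V * (transpose_mat F * (transpose_mat Y * Y) * F * transpose_mat V)
      = V * (transpose_mat F * (transpose_mat Y * Y) * F) * transpose_mat V"
    using assoc_mult_mat[OF V _ VT, of "transpose_mat F * (transpose_mat Y * Y) * F"] FT YTY F by simp
  finally show ?thesis .
qed

lemma mult_congruence_assoc:
  fixes W B D :: "'a :: comm_semiring_1 mat"
  assumes "W \<in> carrier_mat n n" "B \<in> carrier_mat n n" "D \<in> carrier_mat n n"
  shows "W * (B * D * transpose_mat B) * transpose_mat W = (W * B) * D * transpose_mat (W * B)"
  using assms by (simp add: transpose_mult[of W n n B n] assoc_mult_mat[of _ n n _ n _ n])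

lemma sum_sq_entries_eq_diag_sum_gram:
  fixes M :: "real mat"
  assumes M: "M \<in> carrier_mat m n"
  shows "(\<Sum>i<m. \<Sum>j<n. (M $$ (i, j))\<^sup>2) = (\<Sum>j<n. (transpose_mat M * M) $$ (j, j))"
proof -
  have "(\<Sum>j<n. (transpose_mat M * M) $$ (j, j)) = (\<Sum>j<n. \<Sum>i<m. (M $$ (i, j))\<^sup>2)"
    using M by (intro sum.cong refl)
      (subst index_mult_mat_sum[of _ n m _ n], auto simp: power2_eq_square)
  also have "\<dots> = (\<Sum>i<m. \<Sum>j<n. (M $$ (i, j))\<^sup>2)"
    by (rule sum.swap)
  finally show ?thesis ..
qed

lemma mat_diag_Suc_four_block:
  "mat_diag (Suc k) (\<lambda>i. if i = 0 then e else f (i - 1))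
     = four_block_mat (mat_diag 1 (\<lambda>_. e)) (0\<^sub>m 1 k) (0\<^sub>m k 1) (mat_diag k f)"
  by (rule eq_matI) (auto simp: mat_diag_def)

lemma transpose_four_block_diag:
  assumes "V \<in> carrier_mat k k" "E \<in> carrier_mat 1 1"
  shows "transpose_mat (four_block_mat E (0\<^sub>m 1 k) (0\<^sub>m k 1) V)
     = four_block_mat (transpose_mat E) (0\<^sub>m 1 k) (0\<^sub>m k 1) (transpose_mat V)"
  using assms by (simp add: transpose_four_block_mat[of E 1 1 _ k _ k])

lemma mult_four_block_diag:
  assumes "V \<in> carrier_mat k k" "E \<in> carrier_mat 1 1" "W \<in> carrier_mat k k" "F \<in> carrier_mat 1 1"
  shows "four_block_mat E (0\<^sub>m 1 k) (0\<^sub>m k 1) V * four_block_mat F (0\<^sub>m 1 k) (0\<^sub>m k 1) W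
     = four_block_mat (E * F) (0\<^sub>m 1 k) (0\<^sub>m k 1) (V * W)"
  using assms by (simp add: mult_four_block_mat[of _ 1 1 _ k _ k _ _ 1 _ k])

lemma four_block_diag_congruence:
  fixes V D E :: "'a :: comm_semiring_1 mat"
  assumes V: "V \<in> carrier_mat k k" and D: "D \<in> carrier_mat k k" and E: "E \<in> carrier_mat 1 1"
  shows "four_block_mat (1\<^sub>m 1) (0\<^sub>m 1 k) (0\<^sub>m k 1) V * four_block_mat E (0\<^sub>m 1 k) (0\<^sub>m k 1) D
      * transpose_mat (four_block_mat (1\<^sub>m 1) (0\<^sub>m 1 k) (0\<^sub>m k 1) V)
    = four_block_mat E (0\<^sub>m 1 k) (0\<^sub>m k 1) (V * D * transpose_mat V)"
  unfolding transpose_four_block_diag[OF V one_carrier_mat]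
  by (subst mult_four_block_diag[OF V _ D E], simp, subst mult_four_block_diag)
    (use V D E in \<open>auto simp: left_mult_one_mat[OF E] right_mult_one_mat[OF E]\<close>)

section \<open>Orthonormal matrices\<close>

(* Stronger than orthogonal_mat of Jordan_Normal_Form, which only asks for orthogonal columns. *)
definition orthonormal_mat :: "nat \<Rightarrow> 'a :: field mat \<Rightarrow> bool" where
  "orthonormal_mat n V \<longleftrightarrow> V \<in> carrier_mat n n \<and> transpose_mat V * V = 1\<^sub>m n"

lemma orthonormal_matD:
  assumes "orthonormal_mat n V"
  shows "V \<in> carrier_mat n n" "transpose_mat V * V = 1\<^sub>m n" "V * transpose_mat V = 1\<^sub>m n"
  using assms mat_mult_left_right_inverse[of "transpose_mat V" n V]
  by (auto simp: orthonormal_mat_def)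

lemma orthonormal_mat_transpose:
  assumes "orthonormal_mat n V"
  shows "orthonormal_mat n (transpose_mat V)"
  using orthonormal_matD[OF assms] by (simp add: orthonormal_mat_def)

lemma orthonormal_mat_mult:
  assumes V: "orthonormal_mat n V" and W: "orthonormal_mat n W"
  shows "orthonormal_mat n (V * W)"
proof -
  note V = orthonormal_matD[OF V] and W = orthonormal_matD[OF W]
  have "transpose_mat (V * W) * (V * W) = transpose_mat W * (transpose_mat V * V) * W"
    using V(1) W(1) by (simp add: transpose_mult assoc_mult_mat[of _ n n _ n _ n])
  then show ?thesis
    using V W by (simp add: orthonormal_mat_def)
qed

lemma mult_orthonormal_mat_cancel:
  assumes "orthonormal_mat n V" "X \<in> carrier_mat m n"
  shows "X * V * transpose_mat V = X"
  using orthonormal_matD[OF assms(1)] assms(2) by (simp add: assoc_mult_mat[of _ m n _ n _ n])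

lemma orthonormal_mat_congruence_inverse:
  assumes W: "orthonormal_mat n W" and A: "A \<in> carrier_mat n n"
  shows "W * (transpose_mat W * A * W) * transpose_mat W = A"
proof -
  note W' = orthonormal_matD[OF W]
  have WA: "W * (transpose_mat W * A) \<in> carrier_mat n n"
    using W'(1) A by simp
  have "W * (transpose_mat W * A * W) = W * (transpose_mat W * A) * W"
    using W'(1) A by (simp add: assoc_mult_mat[of W n n _ n W n])
  then have "W * (transpose_mat W * A * W) * transpose_mat W = W * (transpose_mat W * A)"
    using mult_orthonormal_mat_cancel[OF W WA] by simp
  also have "\<dots> = W * transpose_mat W * A"
    using W'(1) A by (simp add: assoc_mult_mat[of W n n _ n A n])
  finally show ?thesis
    using W'(3) A by simp
qed

lemma orthonormal_mat_four_block:
  assumes "orthonormal_mat k V"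
  shows "orthonormal_mat (Suc k) (four_block_mat (1\<^sub>m 1) (0\<^sub>m 1 k) (0\<^sub>m k 1) V)"
proof -
  note V = orthonormal_matD[OF assms]
  have "transpose_mat (four_block_mat (1\<^sub>m 1) (0\<^sub>m 1 k) (0\<^sub>m k 1) V)
      * four_block_mat (1\<^sub>m 1) (0\<^sub>m 1 k) (0\<^sub>m k 1) V
    = four_block_mat (1\<^sub>m 1) (0\<^sub>m 1 k) (0\<^sub>m k 1) (1\<^sub>m k)"
    unfolding transpose_four_block_diag[OF V(1) one_carrier_mat]
    by (subst mult_four_block_diag) (use V in auto)
  also have "\<dots> = 1\<^sub>m (Suc k)"
    using four_block_one_mat[of 1 k] by simp
  finally show ?thesis
    using V(1) four_block_carrier_mat[of "1\<^sub>m 1" 1 1 V k k] by (simp add: orthonormal_mat_def)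
qed

lemma diag_sum_orthonormal_congruence:
  assumes V: "orthonormal_mat n V"
  shows "(\<Sum>j<n. (V * mat_diag n f * transpose_mat V) $$ (j, j)) = (\<Sum>l<n. (f l :: real))"
proof -
  note V = orthonormal_matD[OF V]
  have col_norm: "(\<Sum>j<n. V $$ (j, l) * V $$ (j, l)) = 1" if "l < n" for l
  proof -
    have "(transpose_mat V * V) $$ (l, l) = (\<Sum>j<n. V $$ (j, l) * V $$ (j, l))"
      using V(1) that by (subst index_mult_mat_sum[of _ n n _ n]) auto
    then show ?thesis
      using V(2) that by simp
  qed
  have "(\<Sum>j<n. (V * mat_diag n f * transpose_mat V) $$ (j, j))
      = (\<Sum>j<n. \<Sum>l<n. f l * (V $$ (j, l) * V $$ (j, l)))"
    using V(1) by (intro sum.cong refl)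
      (subst index_mult_mat_diag_mult[of _ n n _ n], auto simp: ac_simps)
  also have "\<dots> = (\<Sum>l<n. \<Sum>j<n. f l * (V $$ (j, l) * V $$ (j, l)))"
    by (rule sum.swap)
  also have "\<dots> = (\<Sum>l<n. f l * (\<Sum>j<n. V $$ (j, l) * V $$ (j, l)))"
    by (simp add: sum_distrib_left)
  finally show ?thesis
    by (simp add: col_norm)
qed

lemma eigenvalue_orthonormal_diag:
  fixes A :: "'a :: field mat"
  assumes V: "orthonormal_mat n V" and AV: "A = V * mat_diag n f * transpose_mat V" and j: "j < n"
  shows "eigenvalue A (f j)"
proof -
  note V = orthonormal_matD[OF V]
  have A: "A \<in> carrier_mat n n"
    unfolding AV using V(1) mat_diag_dim[of n f] by (metis mult_carrier_mat transpose_carrier_mat)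
  have "A * V = V * mat_diag n f * (transpose_mat V * V)"
    using V by (simp add: AV assoc_mult_mat[of _ n n _ n V n])
  also have "\<dots> = V * mat_diag n f"
    using V by simp
  finally have "A *\<^sub>v col V j = col (V * mat_diag n f) j"
    using col_mult2[OF A V(1) j] by simp
  also have "\<dots> = f j \<cdot>\<^sub>v col V j"
    using V j by (auto simp: mat_diag_mult_right[OF V(1)] intro!: eq_vecI)
  finally have ev: "A *\<^sub>v col V j = f j \<cdot>\<^sub>v col V j" .
  have "col V j \<bullet> col V j = 1"
    using arg_cong[OF V(2), of "\<lambda>M. M $$ (j, j)"] V(1) j by simp
  then have "col V j \<noteq> 0\<^sub>v n"
    by auto
  moreover have "col V j \<in> carrier_vec n"
    using V(1) j by simp
  ultimately have "eigenvector A (col V j) (f j)"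
    using ev A unfolding eigenvector_def by blast
  then show ?thesis
    unfolding eigenvalue_def by blast
qed

definition normalize_vec :: "real vec \<Rightarrow> real vec" where
  "normalize_vec w = (1 / sqrt (w \<bullet> w)) \<cdot>\<^sub>v w"

lemma normalize_vec_carrier [simp]: "w \<in> carrier_vec n \<Longrightarrow> normalize_vec w \<in> carrier_vec n"
  by (simp add: normalize_vec_def)

lemma scalar_prod_normalize_vec:
  assumes "v \<in> carrier_vec n" "w \<in> carrier_vec n"
  shows "normalize_vec v \<bullet> normalize_vec w = (v \<bullet> w) / (sqrt (v \<bullet> v) * sqrt (w \<bullet> w))"
  using assms by (simp add: normalize_vec_def)

lemma normalize_vec_unit:
  assumes "w \<in> carrier_vec n" "w \<noteq> 0\<^sub>v n"
  shows "normalize_vec w \<bullet> normalize_vec w = 1"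
proof -
  have "w \<bullet> w > 0"
    using conjugate_square_greater_0_vec[OF assms(1)] assms(2) by simp
  then show ?thesis
    using assms by (simp add: scalar_prod_normalize_vec)
qed

lemma orthonormal_mat_of_cols_normalize:
  fixes ws :: "real vec list"
  assumes ws: "set ws \<subseteq> carrier_vec n" "length ws = n" and orth: "corthogonal ws"
  shows "orthonormal_mat n (mat_of_cols n (map normalize_vec ws))"
proof -
  let ?W = "mat_of_cols n (map normalize_vec ws)"
  have wsi: "ws ! i \<in> carrier_vec n" if "i < n" for i
    using ws that by auto
  have colW: "col ?W i = normalize_vec (ws ! i)" if "i < n" for i
    using ws that wsi[OF that] by (intro trans[OF col_mat_of_cols]) auto
  have "(transpose_mat ?W * ?W) $$ (i, j) = 1\<^sub>m n $$ (i, j)" if ij: "i < n" "j < n" for i j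
  proof -
    have "(transpose_mat ?W * ?W) $$ (i, j) = normalize_vec (ws ! i) \<bullet> normalize_vec (ws ! j)"
      using ws ij colW by simp
    also have "\<dots> = 1\<^sub>m n $$ (i, j)"
    proof (cases "i = j")
      case True
      have "ws ! i \<noteq> 0\<^sub>v n"
        using corthogonalD[OF orth, of i i] ws ij by auto
      then show ?thesis
        using True ij normalize_vec_unit[OF wsi] by simp
    next
      case False
      then show ?thesis
        using corthogonalD[OF orth, of i j] ws ij scalar_prod_normalize_vec[OF wsi wsi] by simp
    qed
    finally show ?thesis .
  qed
  then show ?thesis
    unfolding orthonormal_mat_def using ws(2) by (auto intro!: eq_matI)
qed

lemma orthonormal_mat_with_first_col:
  fixes u :: "real vec"
  assumes u: "u \<in> carrier_vec n" and uu: "u \<bullet> u = 1"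
  obtains W where "orthonormal_mat n W" "col W 0 = u"
proof -
  interpret cof_vec_space n "TYPE(real)" .
  have u0: "u \<noteq> 0\<^sub>v n"
    using uu by auto
  define b where "b = basis_completion u"
  from basis_completion[OF u u0, folded b_def]
  have b: "set b \<subseteq> carrier_vec n" "distinct b" "\<not> lin_dep (set b)" "hd b = u" "length b = n"
    by auto
  with u0 u obtain vs where bv: "b = u # vs"
    by (cases b) auto
  define ws where "ws = gram_schmidt n b"
  from gram_schmidt_result[OF b(1-3) ws_def]
  have ws: "set ws \<subseteq> carrier_vec n" "length ws = n" "corthogonal ws"
    using b(5) by auto
  have "ws ! 0 = u"
    using gram_schmidt_hd[OF u, of vs] ws(2) u0 u unfolding ws_def bv
    by (cases "gram_schmidt n (u # vs)") auto
  moreover have "normalize_vec u = u"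
    using uu by (simp add: normalize_vec_def)
  moreover have "n > 0"
    using u u0 by (cases n) auto
  ultimately have "col (mat_of_cols n (map normalize_vec ws)) 0 = u"
    using ws by (intro trans[OF col_mat_of_cols]) auto
  with orthonormal_mat_of_cols_normalize[OF ws] show ?thesis
    using that by blast
qed

section \<open>The spectral theorem for real symmetric matrices\<close>

lemma real_symmetric_eigenvalue_real:
  fixes A :: "real mat"
  assumes A: "A \<in> carrier_mat n n" and sym: "transpose_mat A = A"
    and ev: "eigenvalue (map_mat complex_of_real A) a"
  shows "a \<in> \<real>"
proof -
  define B where "B = map_mat complex_of_real A"
  have B: "B \<in> carrier_mat n n"
    using A by (simp add: B_def)
  have "transpose_mat B = map_mat complex_of_real (transpose_mat A)"
    using A by (auto simp: B_def intro!: eq_matI)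
  then have symB: "transpose_mat B = B"
    by (simp add: sym B_def)
  obtain v where v: "v \<in> carrier_vec n" "v \<noteq> 0\<^sub>v n" and Bv: "B *\<^sub>v v = a \<cdot>\<^sub>v v"
    using ev B unfolding B_def eigenvalue_def eigenvector_def by auto
  have conj_Bv: "conjugate (B *\<^sub>v v) = B *\<^sub>v conjugate v"
    using B v by (intro eq_vecI) (auto simp: B_def scalar_prod_def sum_conjugate conjugate_dist_mul)
  have "a * (v \<bullet>c v) = (B *\<^sub>v v) \<bullet>c v"
    using v Bv by simp
  also have "\<dots> = conjugate v \<bullet> (B *\<^sub>v v)"
    using v B by (intro comm_scalar_prod[of _ n]) auto
  also have "\<dots> = (transpose_mat B *\<^sub>v conjugate v) \<bullet> v"
    using v B by (intro transpose_vec_mult_scalar[symmetric]) auto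
  also have "\<dots> = v \<bullet>c (B *\<^sub>v v)"
    unfolding symB conj_Bv using v B by (intro comm_scalar_prod[of _ n]) auto
  also have "\<dots> = cnj a * (v \<bullet>c v)"
    using v Bv by (simp add: conjugate_smult_vec)
  finally have "a = cnj a"
    using v by simp
  then show ?thesis
    using Reals_cnj_iff by metis
qed

lemma real_symmetric_has_eigenvalue:
  fixes A :: "real mat"
  assumes A: "A \<in> carrier_mat n n" and sym: "transpose_mat A = A" and n: "n > 0"
  obtains e where "eigenvalue A e"
proof -
  define B where "B = map_mat complex_of_real A"
  have B: "B \<in> carrier_mat n n"
    using A by (simp add: B_def)
  obtain as where cp: "char_poly B = (\<Prod>a\<leftarrow>as. [:- a, 1:])" and "length as = n"
    using char_poly_factorized[OF B] by blast
  with n have "poly (char_poly B) (hd as) = 0"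
    by (cases as) (auto simp: cp)
  then have "eigenvalue B (hd as)"
    using eigenvalue_root_char_poly[OF B] by simp
  then obtain e where "hd as = complex_of_real e"
    using real_symmetric_eigenvalue_real[OF A sym] Reals_cases unfolding B_def by metis
  moreover have "char_poly B = map_poly complex_of_real (char_poly A)"
    unfolding B_def by (rule of_real_hom.char_poly_hom[OF A])
  ultimately have "poly (char_poly A) e = 0"
    using \<open>poly (char_poly B) (hd as) = 0\<close> by (simp add: of_real_hom.poly_map_poly)
  then show ?thesis
    using that eigenvalue_root_char_poly[OF A] by blast
qed

lemma real_symmetric_max_eigenvalue:
  fixes A :: "real mat"
  assumes A: "A \<in> carrier_mat n n" and sym: "transpose_mat A = A" and n: "n > 0"
  obtains e u where "u \<in> carrier_vec n" "u \<bullet> u = 1" "A *\<^sub>v u = e \<cdot>\<^sub>v u"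
    "\<And>r. eigenvalue A r \<Longrightarrow> r \<le> e"
proof -
  define R where "R = {r. eigenvalue A r}"
  have "char_poly A \<noteq> 0"
    using degree_monic_char_poly[OF A] by auto
  then have "finite R"
    unfolding R_def eigenvalue_root_char_poly[OF A] by (rule poly_roots_finite)
  moreover have "R \<noteq> {}"
    using real_symmetric_has_eigenvalue[OF A sym n] unfolding R_def by blast
  ultimately have e: "eigenvalue A (Max R)" and le: "\<And>r. eigenvalue A r \<Longrightarrow> r \<le> Max R"
    using Max_in[of R] by (auto simp: R_def)
  obtain v where v: "v \<in> carrier_vec n" "v \<noteq> 0\<^sub>v n" and Av: "A *\<^sub>v v = Max R \<cdot>\<^sub>v v"
    using e A unfolding eigenvalue_def eigenvector_def by auto
  have "A *\<^sub>v normalize_vec v = Max R \<cdot>\<^sub>v normalize_vec v"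
    using A v Av by (simp add: normalize_vec_def mult_mat_vec smult_smult_assoc mult.commute)
  with normalize_vec_unit[OF v] normalize_vec_carrier[OF v(1)] show ?thesis
    using that le by blast
qed

lemma congruence_index_first_col:
  assumes W: "orthonormal_mat n W" and A: "A \<in> carrier_mat n n"
    and W0: "col W 0 = u" and Au: "A *\<^sub>v u = e \<cdot>\<^sub>v u" and i: "i < n"
  shows "(transpose_mat W * A * W) $$ (i, 0) = (if i = 0 then e else 0)"
proof -
  note W = orthonormal_matD[OF W]
  have n: "0 < n"
    using i by simp
  have "(transpose_mat W * A * W) $$ (i, 0) = row (transpose_mat W) i \<bullet> col (A * W) 0"
    using A W i n by (simp add: assoc_mult_mat[of _ n n _ n _ n])
  also have "col (A * W) 0 = e \<cdot>\<^sub>v col W 0"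
    unfolding col_mult2[OF A W(1) n] W0 Au ..
  also have "row (transpose_mat W) i \<bullet> (e \<cdot>\<^sub>v col W 0) = e * (col W i \<bullet> col W 0)"
    using W(1) i n by simp
  also have "col W i \<bullet> col W 0 = (transpose_mat W * W) $$ (i, 0)"
    using W(1) i n by simp
  finally show ?thesis
    using W(2) i n by simp
qed

lemma symmetric_first_col_four_block:
  assumes C: "C \<in> carrier_mat (Suc k) (Suc k)" and sym: "transpose_mat C = C"
    and C0: "\<And>i. i < Suc k \<Longrightarrow> C $$ (i, 0) = (if i = 0 then e else 0)"
  shows "C = four_block_mat (mat_diag 1 (\<lambda>_. e)) (0\<^sub>m 1 k) (0\<^sub>m k 1)
    (mat k k (\<lambda>(i, j). C $$ (Suc i, Suc j)))"
proof (rule eq_matI)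
  fix i j assume "i < dim_row (four_block_mat (mat_diag 1 (\<lambda>_. e)) (0\<^sub>m 1 k) (0\<^sub>m k 1)
      (mat k k (\<lambda>(i, j). C $$ (Suc i, Suc j))))"
    "j < dim_col (four_block_mat (mat_diag 1 (\<lambda>_. e)) (0\<^sub>m 1 k) (0\<^sub>m k 1)
      (mat k k (\<lambda>(i, j). C $$ (Suc i, Suc j))))"
  then have ij: "i < Suc k" "j < Suc k"
    by simp_all
  then have "C $$ (0, j) = C $$ (j, 0)"
    using index_transpose_eq[OF sym C, of j 0] by simp
  then show "C $$ (i, j) = four_block_mat (mat_diag 1 (\<lambda>_. e)) (0\<^sub>m 1 k) (0\<^sub>m k 1)
      (mat k k (\<lambda>(i, j). C $$ (Suc i, Suc j))) $$ (i, j)"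
    using ij C0 by (auto simp: mat_diag_def)
qed (use C in auto)

lemma symmetric_deflation:
  fixes A :: "real mat"
  assumes A: "A \<in> carrier_mat (Suc k) (Suc k)" and sym: "transpose_mat A = A"
    and u: "u \<in> carrier_vec (Suc k)" "u \<bullet> u = 1" and Au: "A *\<^sub>v u = e \<cdot>\<^sub>v u"
  obtains W A' where "orthonormal_mat (Suc k) W" "A' \<in> carrier_mat k k" "transpose_mat A' = A'"
    "A = W * four_block_mat (mat_diag 1 (\<lambda>_. e)) (0\<^sub>m 1 k) (0\<^sub>m k 1) A' * transpose_mat W"
proof -
  obtain W where W: "orthonormal_mat (Suc k) W" and W0: "col W 0 = u"
    using orthonormal_mat_with_first_col[OF u] .
  define C where "C = transpose_mat W * A * W"
  define A' where "A' = mat k k (\<lambda>(i, j). C $$ (Suc i, Suc j))"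
  have C: "C \<in> carrier_mat (Suc k) (Suc k)"
    using A orthonormal_matD(1)[OF W] by (simp add: C_def)
  have symC: "transpose_mat C = C"
    unfolding C_def by (rule transpose_congruence_symmetric[OF A sym orthonormal_matD(1)[OF W]])
  have "C = four_block_mat (mat_diag 1 (\<lambda>_. e)) (0\<^sub>m 1 k) (0\<^sub>m k 1) A'"
    unfolding A'_def using C symC congruence_index_first_col[OF W A W0 Au]
    by (intro symmetric_first_col_four_block) (auto simp: C_def)
  moreover have "W * C * transpose_mat W = A"
    unfolding C_def by (rule orthonormal_mat_congruence_inverse[OF W A])
  moreover have "transpose_mat A' = A'"
    using index_transpose_eq[OF symC C] by (auto simp: A'_def intro!: eq_matI)
  moreover have "A' \<in> carrier_mat k k"
    by (simp add: A'_def)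
  ultimately show ?thesis
    using that[OF W] by metis
qed

lemma antimono_on_prepend:
  fixes f :: "nat \<Rightarrow> 'a :: order"
  assumes f: "antimono_on {..<k} f" and le: "\<And>i. i < k \<Longrightarrow> f i \<le> e"
  shows "antimono_on {..<Suc k} (\<lambda>i. if i = 0 then e else f (i - 1))"
  using f le by (auto simp: monotone_on_def)

(* Induction on n: deflate along a unit eigenvector of the largest eigenvalue; the eigenvalues
  of the deflated block are eigenvalues of A, so they stay below it. *)
lemma real_symmetric_diagonalization:
  fixes A :: "real mat"
  assumes "A \<in> carrier_mat n n" "transpose_mat A = A"
  obtains V f where "orthonormal_mat n V" "antimono_on {..<n} f"
    "A = V * mat_diag n f * transpose_mat V"
proof -
  have "\<exists>V f. orthonormal_mat n V \<and> antimono_on {..<n} f \<and> A = V * mat_diag n f * transpose_mat V"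
    using assms
  proof (induction n arbitrary: A)
    case 0
    then show ?case
      by (intro exI[of _ "1\<^sub>m 0"] exI[of _ "\<lambda>_. 0"])
        (auto simp: orthonormal_mat_def monotone_on_def intro!: eq_matI)
  next
    case (Suc k)
    obtain e u where u: "u \<in> carrier_vec (Suc k)" "u \<bullet> u = 1" and Au: "A *\<^sub>v u = e \<cdot>\<^sub>v u"
      and e_max: "\<And>r. eigenvalue A r \<Longrightarrow> r \<le> e"
      using real_symmetric_max_eigenvalue[OF Suc.prems] by blast
    obtain W A' where W: "orthonormal_mat (Suc k) W"
      and A': "A' \<in> carrier_mat k k" "transpose_mat A' = A'"
      and AW: "A = W * four_block_mat (mat_diag 1 (\<lambda>_. e)) (0\<^sub>m 1 k) (0\<^sub>m k 1) A' * transpose_mat W"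
      using symmetric_deflation[OF Suc.prems u Au] .
    obtain V' f' where V': "orthonormal_mat k V'" and f': "antimono_on {..<k} f'"
      and A'V': "A' = V' * mat_diag k f' * transpose_mat V'"
      using Suc.IH[OF A'] by blast
    define B where "B = four_block_mat (1\<^sub>m 1) (0\<^sub>m 1 k) (0\<^sub>m k 1) V'"
    define g where "g i = (if i = 0 then e else f' (i - 1))" for i
    have B: "orthonormal_mat (Suc k) B"
      unfolding B_def by (rule orthonormal_mat_four_block[OF V'])
    have "four_block_mat (mat_diag 1 (\<lambda>_. e)) (0\<^sub>m 1 k) (0\<^sub>m k 1) A'
        = B * mat_diag (Suc k) g * transpose_mat B"
      unfolding B_def g_def mat_diag_Suc_four_block A'V'
      by (rule four_block_diag_congruence[symmetric]) (use orthonormal_matD[OF V'] in auto)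
    then have AWB: "A = (W * B) * mat_diag (Suc k) g * transpose_mat (W * B)"
      unfolding AW using orthonormal_matD(1)[OF W] orthonormal_matD(1)[OF B]
      by (simp add: mult_congruence_assoc)
    have "f' i \<le> e" if "i < k" for i
      using e_max eigenvalue_orthonormal_diag[OF orthonormal_mat_mult[OF W B] AWB, of "Suc i"] that
      by (simp add: g_def)
    then have "antimono_on {..<Suc k} g"
      unfolding g_def by (rule antimono_on_prepend[OF f'])
    with orthonormal_mat_mult[OF W B] AWB show ?case
      by blast
  qed
  then obtain V f where "orthonormal_mat n V" "antimono_on {..<n} f"
    "A = V * mat_diag n f * transpose_mat V"
    by blast
  then show ?thesis
    by (rule that)
qed

section \<open>Singular values\<close>

lemma char_poly_mat_diag: "char_poly (mat_diag n f) = (\<Prod>a\<leftarrow>map f [0..<n]. [:- a, 1:])"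
proof -
  have "upper_triangular (mat_diag n f)"
    by (auto simp: upper_triangular_def mat_diag_def)
  moreover have "diag_mat (mat_diag n f) = map f [0..<n]"
    by (auto simp: diag_mat_def mat_diag_def intro: nth_equalityI)
  ultimately show ?thesis
    using char_poly_upper_triangular[OF mat_diag_dim, of n f] by simp
qed

lemma proots_prod_linear: "proots (\<Prod>a\<leftarrow>as. [:- a, 1:]) = mset (as :: 'a :: idom list)"
proof (induction as)
  case (Cons a as)
  have "proots ([:- a, 1:] * (\<Prod>a\<leftarrow>as. [:- a, 1:])) = proots [:- a, 1:] + proots (\<Prod>a\<leftarrow>as. [:- a, 1:])"
    by (rule proots_mult) (auto simp: prod_list_zero_iff)
  with Cons show ?case
    by simp
qed simp

lemma gram_eigs_desc_eq:
  fixes X :: "real mat"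
  assumes V: "orthonormal_mat n V" and f: "antimono_on {..<n} f"
    and G: "transpose_mat X * X = V * mat_diag n f * transpose_mat V"
  shows "gram_eigs_desc X = map f [0..<n]"
proof -
  note V = orthonormal_matD[OF V]
  have "transpose_mat X * X \<in> carrier_mat n n"
    unfolding G using V(1) mat_diag_dim[of n f] by (metis mult_carrier_mat transpose_carrier_mat)
  then have "similar_mat (transpose_mat X * X) (mat_diag n f)"
    using V G by (intro similar_matI[of _ _ _ _ n]) auto
  then have "proots (char_poly (transpose_mat X * X)) = mset (map f [0..<n])"
    by (simp only: char_poly_similar char_poly_mat_diag proots_prod_linear)
  moreover have "sorted_wrt (\<lambda>i j. f j \<le> f i) [0..<n]"
    using f by (auto simp: sorted_wrt_iff_nth_less monotone_on_def)
  then have "sorted (rev (map f [0..<n]))"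
    by (simp add: sorted_wrt_rev sorted_wrt_map)
  then have "sort (map f [0..<n]) = rev (map f [0..<n])"
    by (intro properties_for_sort) auto
  ultimately show ?thesis
    unfolding gram_eigs_desc_def by (simp only: sorted_list_of_multiset_mset rev_rev_ident)
qed

lemma trunc_nuc_eq_sum:
  assumes "X \<in> carrier_mat m n" and "gram_eigs_desc X = map f [0..<n]"
  shows "trunc_nuc K X = (\<Sum>l = K..<min m n. sqrt (f l))"
proof -
  have "{K + 1..min m n} = Suc ` {K..<min m n}"
    by (auto simp: image_iff intro!: bexI[of _ "_ - 1"])
  moreover have "dim_row X = m" "dim_col X = n"
    using assms(1) by auto
  ultimately have "trunc_nuc K X = (\<Sum>i\<in>Suc ` {K..<min m n}. sqrt (map f [0..<n] ! (i - 1)))"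
    by (simp only: trunc_nuc_def sing_val_def assms(2))
  also have "\<dots> = (\<Sum>l = K..<min m n. sqrt (map f [0..<n] ! l))"
    by (subst sum.reindex) auto
  also have "\<dots> = (\<Sum>l = K..<min m n. sqrt (f l))"
    by (intro sum.cong) auto
  finally show ?thesis .
qed

lemma gram_diagonalization:
  fixes X :: "real mat"
  assumes X: "X \<in> carrier_mat m n"
  obtains V f where "orthonormal_mat n V" "antimono_on {..<n} f"
    "transpose_mat (X * V) * (X * V) = mat_diag n f"
proof -
  have G: "transpose_mat X * X \<in> carrier_mat n n"
    using X by simp
  have "transpose_mat (transpose_mat X * X) = transpose_mat X * X"
    using X by (simp add: transpose_mult[of _ n m X n])
  then obtain V f where V: "orthonormal_mat n V" and f: "antimono_on {..<n} f"
    and GV: "transpose_mat X * X = V * mat_diag n f * transpose_mat V"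
    using real_symmetric_diagonalization[OF G] by blast
  note V' = orthonormal_matD[OF V]
  have "transpose_mat (X * V) * (X * V) = transpose_mat V * (transpose_mat X * X) * V"
    using X V'(1) by (simp add: transpose_mult[of X m n V n] assoc_mult_mat[of _ n n _ m _ n]
        assoc_mult_mat[of _ n m _ n _ n] assoc_mult_mat[of _ n n _ n _ n])
  also have "\<dots> = mat_diag n f"
    using orthonormal_mat_congruence_inverse[OF orthonormal_mat_transpose[OF V], of "mat_diag n f"]
    by (simp add: GV)
  finally show ?thesis
    using that V f by blast
qed

lemma gram_diag_nonneg:
  fixes Y :: "real mat"
  assumes Y: "Y \<in> carrier_mat m n" and G: "transpose_mat Y * Y = mat_diag n f" and i: "i < n"
  shows "0 \<le> f i"
proof -
  have "f i = (transpose_mat Y * Y) $$ (i, i)"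
    using i by (simp add: G mat_diag_def)
  also have "\<dots> = (\<Sum>l<m. (Y $$ (l, i))\<^sup>2)"
    using Y i by (simp add: scalar_prod_def lessThan_atLeast0 power2_eq_square)
  finally show ?thesis
    by (simp add: sum_nonneg)
qed

(* If f i \<noteq> 0 then f 0, ..., f m are positive, so the first m + 1 columns of Y are nonzero and
  orthogonal. Padded with a zero row they form a square matrix Z with a left inverse L, yet Z * L has
  a zero on its diagonal. *)
lemma gram_diag_vanishes_beyond_rows:
  fixes Y :: "real mat"
  assumes Y: "Y \<in> carrier_mat m n" and G: "transpose_mat Y * Y = mat_diag n f"
    and f: "antimono_on {..<n} f" and i: "m \<le> i" "i < n"
  shows "f i = 0"
proof (rule ccontr)
  assume "f i \<noteq> 0"
  then have pos: "0 < f l" if "l \<le> m" for l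
    using f gram_diag_nonneg[OF Y G] i that
    by (force simp: monotone_on_def intro: less_le_trans[of 0 "f i"])
  define Z where "Z = mat (Suc m) (Suc m) (\<lambda>(p, q). if p < m then Y $$ (p, q) else 0)"
  define L where "L = mat (Suc m) (Suc m) (\<lambda>(p, q). Z $$ (q, p) / f p)"
  have Z: "Z \<in> carrier_mat (Suc m) (Suc m)" and L: "L \<in> carrier_mat (Suc m) (Suc m)"
    by (simp_all add: Z_def L_def)
  have cols: "(\<Sum>r<Suc m. Z $$ (r, p) * Z $$ (r, q)) = (if p = q then f p else 0)"
    if "p < Suc m" "q < Suc m" for p q
  proof -
    have "(\<Sum>r<Suc m. Z $$ (r, p) * Z $$ (r, q)) = (\<Sum>r<m. transpose_mat Y $$ (p, r) * Y $$ (r, q))"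
      using that i Y by (simp add: Z_def)
    also have "\<dots> = (transpose_mat Y * Y) $$ (p, q)"
      by (rule index_mult_mat_sum[of _ n m _ n, symmetric]) (use that i Y in auto)
    finally show ?thesis
      using that i by (simp add: G mat_diag_def)
  qed
  have "L * Z = 1\<^sub>m (Suc m)"
  proof (rule eq_matI)
    fix p q assume "p < dim_row (1\<^sub>m (Suc m))" "q < dim_col (1\<^sub>m (Suc m))"
    then have pq: "p < Suc m" "q < Suc m"
      by auto
    have "(L * Z) $$ (p, q) = (\<Sum>r<Suc m. L $$ (p, r) * Z $$ (r, q))"
      by (rule index_mult_mat_sum[OF L Z pq])
    also have "\<dots> = (\<Sum>r<Suc m. Z $$ (r, p) * Z $$ (r, q)) / f p"
      unfolding sum_divide_distrib using pq by (intro sum.cong) (auto simp: L_def)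
    also have "\<dots> = 1\<^sub>m (Suc m) $$ (p, q)"
      unfolding cols[OF pq] using pq pos[of p] by auto
    finally show "(L * Z) $$ (p, q) = 1\<^sub>m (Suc m) $$ (p, q)" .
  qed (use L Z in auto)
  then have "Z * L = 1\<^sub>m (Suc m)"
    using mat_mult_left_right_inverse[OF L Z] by simp
  moreover have "(Z * L) $$ (m, m) = (\<Sum>r<Suc m. Z $$ (m, r) * L $$ (r, m))"
    by (rule index_mult_mat_sum[OF Z L]) auto
  then have "(Z * L) $$ (m, m) = 0"
    by (simp add: Z_def)
  ultimately show False
    by simp
qed

lemma sum_squares_le_square_sum:
  fixes b :: "'a \<Rightarrow> real"
  assumes "finite S" "\<And>x. x \<in> S \<Longrightarrow> 0 \<le> b x"
  shows "(\<Sum>x\<in>S. (b x)\<^sup>2) \<le> (\<Sum>x\<in>S. b x)\<^sup>2"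
  using assms
proof (induction S rule: finite_induct)
  case (insert x F)
  have "0 \<le> b x" "0 \<le> (\<Sum>y\<in>F. b y)"
    using insert.prems by (auto intro: sum_nonneg)
  then have "(b x)\<^sup>2 + (\<Sum>y\<in>F. b y)\<^sup>2 \<le> (b x + (\<Sum>y\<in>F. b y))\<^sup>2"
    by (simp add: power2_sum)
  with insert show ?case
    by simp
qed simp

lemma square_sum_le_card_mult_sum_squares:
  fixes a :: "'a \<Rightarrow> real"
  assumes "finite S"
  shows "(\<Sum>x\<in>S. a x)\<^sup>2 \<le> real (card S) * (\<Sum>x\<in>S. (a x)\<^sup>2)"
proof (cases "S = {}")
  case False
  define c where "c = real (card S)"
  define s where "s = (\<Sum>x\<in>S. a x)"
  define q where "q = (\<Sum>x\<in>S. (a x)\<^sup>2)"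
  have c: "0 < c"
    using assms False by (simp add: c_def card_gt_0_iff)
  have "0 \<le> (\<Sum>x\<in>S. (c * a x - s)\<^sup>2)"
    by (intro sum_nonneg) auto
  also have "\<dots> = (\<Sum>x\<in>S. c\<^sup>2 * (a x)\<^sup>2 - 2 * c * s * a x + s\<^sup>2)"
    by (intro sum.cong refl) (simp add: power2_eq_square algebra_simps)
  also have "\<dots> = c\<^sup>2 * q - 2 * c * s * s + c * s\<^sup>2"
    unfolding q_def s_def c_def using assms
    by (simp add: sum.distrib sum_subtractf sum_distrib_left)
  also have "\<dots> = c * (c * q - s\<^sup>2)"
    by (simp add: power2_eq_square algebra_simps)
  finally show ?thesis
    using c by (simp add: zero_le_mult_iff s_def c_def q_def)
qed simp

lemma l1_norm_mat_le_sqrt_sum_sq: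
  assumes M: "M \<in> carrier_mat m n"
  shows "l1_norm_mat M \<le> sqrt (real (m * n)) * sqrt (\<Sum>i<m. \<Sum>j<n. (M $$ (i, j))\<^sup>2)"
proof -
  let ?I = "{..<m} \<times> {..<n}"
  have "(l1_norm_mat M)\<^sup>2 = (\<Sum>p\<in>?I. \<bar>M $$ p\<bar>)\<^sup>2"
    using M by (simp add: l1_norm_mat_def sum.cartesian_product)
  also have "\<dots> \<le> real (m * n) * (\<Sum>p\<in>?I. \<bar>M $$ p\<bar>\<^sup>2)"
    using square_sum_le_card_mult_sum_squares[of ?I "\<lambda>p. \<bar>M $$ p\<bar>"]
    by (simp add: card_cartesian_product)
  also have "(\<Sum>p\<in>?I. \<bar>M $$ p\<bar>\<^sup>2) = (\<Sum>i<m. \<Sum>j<n. (M $$ (i, j))\<^sup>2)"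
    by (simp add: sum.cartesian_product)
  finally have "(l1_norm_mat M)\<^sup>2 \<le> (sqrt (real (m * n)) * sqrt (\<Sum>i<m. \<Sum>j<n. (M $$ (i, j))\<^sup>2))\<^sup>2"
    by (simp add: power_mult_distrib sum_nonneg)
  then show ?thesis
    by (rule power2_le_imp_le) (simp add: sum_nonneg)
qed

lemma antimono_on_tail_scaling:
  fixes f :: "nat \<Rightarrow> real"
  assumes f: "antimono_on {..<n} f" and nonneg: "\<And>i. i < n \<Longrightarrow> 0 \<le> f i" and c: "0 \<le> c" "c \<le> 1"
  shows "antimono_on {..<n} (\<lambda>i. (if i < K then 1 else c)\<^sup>2 * f i)"
proof (rule monotone_onI)
  fix i j assume ij: "i \<in> {..<n}" "j \<in> {..<n}" "i \<le> j"
  have fij: "f j \<le> f i"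
    using f ij by (simp add: monotone_on_def)
  have "c\<^sup>2 \<le> 1"
    using c by (simp add: power_le_one)
  then have "c\<^sup>2 * f j \<le> f j"
    using c nonneg[of j] ij by (simp add: mult_left_le_one_le)
  moreover have "c\<^sup>2 * f j \<le> c\<^sup>2 * f i"
    using fij by (simp add: mult_left_mono)
  ultimately show "(if j < K then 1 else c)\<^sup>2 * f j \<le> (if i < K then 1 else c)\<^sup>2 * f i"
    using fij ij by auto
qed

section \<open>Rescaling singular values\<close>

(* The data of a singular value decomposition X = Y V\<^sup>T with Y = U \<Sigma>: the columns of Y are
  orthogonal, with squared norms f i equal to the eigenvalues of X\<^sup>T X in decreasing order.
  rescaled g multiplies the i-th singular value by \<bar>g i\<bar>. *)
locale gram_diagonal_factorization =
  fixes m n :: nat and Y V :: "real mat" and f :: "nat \<Rightarrow> real"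
  assumes Y: "Y \<in> carrier_mat m n" and V: "orthonormal_mat n V"
    and f: "antimono_on {..<n} f" and gram_Y: "transpose_mat Y * Y = mat_diag n f"
begin

definition rescaled :: "(nat \<Rightarrow> real) \<Rightarrow> real mat" where
  "rescaled g = Y * mat_diag n g * transpose_mat V"

lemma rescaled_carrier: "rescaled g \<in> carrier_mat m n"
  using Y orthonormal_matD(1)[OF V] mat_diag_dim[of n g]
  unfolding rescaled_def by (metis mult_carrier_mat transpose_carrier_mat)

lemma dim_rescaled [simp]: "dim_row (rescaled g) = m" "dim_col (rescaled g) = n"
  using rescaled_carrier[of g] by auto

lemma index_rescaled:
  "i < m \<Longrightarrow> j < n \<Longrightarrow> rescaled g $$ (i, j) = (\<Sum>l<n. Y $$ (i, l) * g l * V $$ (j, l))"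
  using Y orthonormal_matD(1)[OF V] unfolding rescaled_def
  by (subst index_mult_mat_diag_mult[of _ m n _ n]) auto

lemma rescaled_add_smult: "rescaled g + t \<cdot>\<^sub>m rescaled h = rescaled (\<lambda>i. g i + t * h i)"
proof (rule eq_matI)
  fix i j assume "i < dim_row (rescaled (\<lambda>i. g i + t * h i))"
    "j < dim_col (rescaled (\<lambda>i. g i + t * h i))"
  then have ij: "i < m" "j < n"
    by simp_all
  then have "(rescaled g + t \<cdot>\<^sub>m rescaled h) $$ (i, j)
      = rescaled g $$ (i, j) + t * rescaled h $$ (i, j)"
    by simp
  also have "\<dots> = (\<Sum>l<n. Y $$ (i, l) * (g l + t * h l) * V $$ (j, l))"
    unfolding index_rescaled[OF ij] sum_distrib_left sum.distrib[symmetric]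
    by (intro sum.cong) (auto simp: algebra_simps)
  finally show "(rescaled g + t \<cdot>\<^sub>m rescaled h) $$ (i, j) = rescaled (\<lambda>i. g i + t * h i) $$ (i, j)"
    unfolding index_rescaled[OF ij] .
qed simp_all

lemma gram_rescaled:
  "transpose_mat (rescaled g) * rescaled g = V * mat_diag n (\<lambda>i. (g i)\<^sup>2 * f i) * transpose_mat V"
proof -
  have "(\<lambda>i. g i * f i * g i) = (\<lambda>i. (g i)\<^sup>2 * f i)"
    by (auto simp: power2_eq_square)
  then show ?thesis
    unfolding rescaled_def gram_congruence[OF Y mat_diag_dim orthonormal_matD(1)[OF V]]
    by (simp only: transpose_mat_diag gram_Y mat_diag_diag)
qed

lemma gram_eigs_desc_rescaled:
  assumes "antimono_on {..<n} (\<lambda>i. (g i)\<^sup>2 * f i)"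
  shows "gram_eigs_desc (rescaled g) = map (\<lambda>i. (g i)\<^sup>2 * f i) [0..<n]"
  by (rule gram_eigs_desc_eq[OF V assms gram_rescaled])

lemma trunc_nuc_rescaled:
  assumes "antimono_on {..<n} (\<lambda>i. (g i)\<^sup>2 * f i)"
  shows "trunc_nuc K (rescaled g) = (\<Sum>l = K..<min m n. \<bar>g l\<bar> * sqrt (f l))"
  unfolding trunc_nuc_eq_sum[OF rescaled_carrier gram_eigs_desc_rescaled[OF assms]]
  by (simp add: real_sqrt_mult)

lemma sum_sq_rescaled: "(\<Sum>i<m. \<Sum>j<n. (rescaled g $$ (i, j))\<^sup>2) = (\<Sum>l<n. (g l)\<^sup>2 * f l)"
  unfolding sum_sq_entries_eq_diag_sum_gram[OF rescaled_carrier] gram_rescaled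
  by (rule diag_sum_orthonormal_congruence[OF V])

lemma eigen_nonneg: "i < n \<Longrightarrow> 0 \<le> f i"
  by (rule gram_diag_nonneg[OF Y gram_Y])

lemma eigen_vanishes_beyond_rows: "m \<le> i \<Longrightarrow> i < n \<Longrightarrow> f i = 0"
  by (rule gram_diag_vanishes_beyond_rows[OF Y gram_Y f])

lemma rescaled_one: "rescaled (\<lambda>_. 1) = Y * transpose_mat V"
  using Y by (simp add: rescaled_def)

lemma tail_sqrt_sum_nonneg: "0 \<le> (\<Sum>l = K..<min m n. sqrt (f l))"
  by (intro sum_nonneg) (auto intro: eigen_nonneg)

lemma trunc_nuc_rescaled_tail:
  assumes "0 \<le> c" "c \<le> 1"
  shows "trunc_nuc K (rescaled (\<lambda>i. if i < K then 1 else c)) = c * (\<Sum>l = K..<min m n. sqrt (f l))"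
proof -
  have "trunc_nuc K (rescaled (\<lambda>i. if i < K then 1 else c))
      = (\<Sum>l = K..<min m n. \<bar>if l < K then 1 else c\<bar> * sqrt (f l))"
    by (rule trunc_nuc_rescaled[OF antimono_on_tail_scaling[OF f eigen_nonneg assms]])
  also have "\<dots> = c * (\<Sum>l = K..<min m n. sqrt (f l))"
    using assms by (simp add: sum_distrib_left)
  finally show ?thesis .
qed

lemma sum_sq_rescaled_tail_le:
  "(\<Sum>i<m. \<Sum>j<n. (rescaled (\<lambda>l. if l < K then 0 else c) $$ (i, j))\<^sup>2)
     \<le> c\<^sup>2 * (\<Sum>l = K..<min m n. sqrt (f l))\<^sup>2"
proof -
  have "(\<Sum>l<n. (if l < K then 0 else c)\<^sup>2 * f l)
      = (\<Sum>l = K..<min m n. (if l < K then 0 else c)\<^sup>2 * f l)"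
    by (rule sum.mono_neutral_right) (auto simp: eigen_vanishes_beyond_rows)
  also have "\<dots> = c\<^sup>2 * (\<Sum>l = K..<min m n. (sqrt (f l))\<^sup>2)"
    unfolding sum_distrib_left
    by (intro sum.cong refl)
      (auto simp del: real_sqrt_pow2_iff intro!: real_sqrt_pow2[symmetric] eigen_nonneg)
  also have "\<dots> \<le> c\<^sup>2 * (\<Sum>l = K..<min m n. sqrt (f l))\<^sup>2"
    by (intro mult_left_mono sum_squares_le_square_sum) (auto intro: eigen_nonneg)
  finally show ?thesis
    unfolding sum_sq_rescaled .
qed

end

lemma gram_diagonal_factorization_exists:
  fixes X :: "real mat"
  assumes "X \<in> carrier_mat m n"
  obtains Y V f where "gram_diagonal_factorization m n Y V f" "X = Y * transpose_mat V"
proof -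
  obtain V f where V: "orthonormal_mat n V" and f: "antimono_on {..<n} f"
    and G: "transpose_mat (X * V) * (X * V) = mat_diag n f"
    using gram_diagonalization[OF assms] .
  have "gram_diagonal_factorization m n (X * V) V f"
    using assms orthonormal_matD(1)[OF V] V f G by unfold_locales auto
  moreover have "X = X * V * transpose_mat V"
    using mult_orthonormal_mat_cancel[OF V assms] by simp
  ultimately show ?thesis
    using that by blast
qed

lemma trunc_nuc_nonneg:
  fixes X :: "real mat"
  assumes "X \<in> carrier_mat m n"
  shows "0 \<le> trunc_nuc K X"
proof -
  obtain Y V f where F: "gram_diagonal_factorization m n Y V f" and X: "X = Y * transpose_mat V"
    using gram_diagonal_factorization_exists[OF assms] .
  interpret gram_diagonal_factorization m n Y V f
    by (rule F)
  have "X = rescaled (\<lambda>i. if i < K then 1 else 1)"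
    using X rescaled_one by simp
  then show ?thesis
    using trunc_nuc_rescaled_tail[of 1 K] tail_sqrt_sum_nonneg by simp
qed

lemma tail_shrinking_direction:
  fixes X :: "real mat"
  assumes "X \<in> carrier_mat m n"
  obtains D where "D \<in> carrier_mat m n" "l1_norm_mat D \<le> sqrt (real (m * n)) * trunc_nuc K X"
    "\<And>t. 0 \<le> t \<Longrightarrow> t \<le> 1 \<Longrightarrow> trunc_nuc K (X + t \<cdot>\<^sub>m D) = (1 - t) * trunc_nuc K X"
proof -
  obtain Y V f where F: "gram_diagonal_factorization m n Y V f" and XYV: "X = Y * transpose_mat V"
    using gram_diagonal_factorization_exists[OF assms] .
  interpret gram_diagonal_factorization m n Y V f
    by (rule F)
  define T where "T = (\<Sum>l = K..<min m n. sqrt (f l))"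
  define D where "D = rescaled (\<lambda>l. if l < K then 0 else -1)"
  have X: "X = rescaled (\<lambda>i. if i < K then 1 else 1)"
    using XYV rescaled_one by simp
  then have T: "trunc_nuc K X = T"
    using trunc_nuc_rescaled_tail[of 1 K] by (simp add: T_def)
  have "X + t \<cdot>\<^sub>m D = rescaled (\<lambda>i. if i < K then 1 else 1 - t)" for t
    unfolding X D_def rescaled_add_smult by (rule arg_cong[of _ _ rescaled]) auto
  then have shrink: "trunc_nuc K (X + t \<cdot>\<^sub>m D) = (1 - t) * trunc_nuc K X" if "0 \<le> t" "t \<le> 1" for t
    using trunc_nuc_rescaled_tail[of "1 - t" K] that by (simp add: T T_def)
  have "(\<Sum>i<m. \<Sum>j<n. (D $$ (i, j))\<^sup>2) \<le> T\<^sup>2"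
    using sum_sq_rescaled_tail_le[of K "-1"] by (simp add: D_def T_def)
  then have "sqrt (\<Sum>i<m. \<Sum>j<n. (D $$ (i, j))\<^sup>2) \<le> T"
    using tail_sqrt_sum_nonneg[of K] by (simp add: T_def real_le_lsqrt sum_nonneg)
  then have "l1_norm_mat D \<le> sqrt (real (m * n)) * trunc_nuc K X"
    using l1_norm_mat_le_sqrt_sum_sq[OF rescaled_carrier, of "\<lambda>l. if l < K then 0 else -1"]
    by (simp add: D_def T order_trans[OF _ mult_left_mono])
  with rescaled_carrier shrink show ?thesis
    using that unfolding D_def by blast
qed

section \<open>d-stationary points\<close>

lemma l1_norm_mat_diff_add_smult_le:
  assumes A: "A \<in> carrier_mat m n" and X: "X \<in> carrier_mat m n" and D: "D \<in> carrier_mat m n"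
    and t: "0 \<le> t"
  shows "l1_norm_mat (A - (X + t \<cdot>\<^sub>m D)) \<le> l1_norm_mat (A - X) + t * l1_norm_mat D"
proof -
  have "l1_norm_mat (A - (X + t \<cdot>\<^sub>m D)) = (\<Sum>i<m. \<Sum>j<n. \<bar>(A $$ (i, j) - X $$ (i, j)) - t * D $$ (i, j)\<bar>)"
    unfolding l1_norm_mat_def using A X D by (intro sum.cong) auto
  also have "\<dots> \<le> (\<Sum>i<m. \<Sum>j<n. \<bar>A $$ (i, j) - X $$ (i, j)\<bar> + t * \<bar>D $$ (i, j)\<bar>)"
    using t by (intro sum_mono) (simp add: abs_triangle_ineq4[THEN order_trans] abs_mult)
  also have "\<dots> = l1_norm_mat (A - X) + t * l1_norm_mat D"
    unfolding l1_norm_mat_def using A X D by (simp add: sum.distrib sum_distrib_left)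
  finally show ?thesis .
qed

lemma obj_add_smult_diff_le:
  assumes A: "A \<in> carrier_mat m n" and X: "X \<in> carrier_mat m n" and D: "D \<in> carrier_mat m n"
    and t: "0 \<le> t" and shrink: "trunc_nuc K (X + t \<cdot>\<^sub>m D) = (1 - t) * trunc_nuc K X"
  shows "obj A K \<gamma> (X + t \<cdot>\<^sub>m D) - obj A K \<gamma> X \<le> t * (l1_norm_mat D - \<gamma> * trunc_nuc K X)"
proof -
  have "obj A K \<gamma> (X + t \<cdot>\<^sub>m D) - obj A K \<gamma> X
      = l1_norm_mat (A - (X + t \<cdot>\<^sub>m D)) - l1_norm_mat (A - X) - t * (\<gamma> * trunc_nuc K X)"
    unfolding obj_def shrink by (simp add: algebra_simps)
  also have "\<dots> \<le> t * (l1_norm_mat D - \<gamma> * trunc_nuc K X)"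
    using l1_norm_mat_diff_add_smult_le[OF A X D t] by (simp add: algebra_simps)
  finally show ?thesis .
qed

lemma not_d_stationary_of_descent:
  assumes D: "D \<in> carrier_mat m n" and c: "c < 0"
    and descent: "\<forall>\<^sub>F t in at_right 0. F (X + t \<cdot>\<^sub>m D) - F X \<le> t * c"
  shows "\<not> d_stationary m n F X"
proof
  assume "d_stationary m n F X"
  then obtain L where L: "0 \<le> L" and lim: "((\<lambda>t. (F (X + t \<cdot>\<^sub>m D) - F X) / t) \<longlongrightarrow> L) (at_right 0)"
    using D unfolding d_stationary_def by blast
  have "\<forall>\<^sub>F t in at_right 0. (F (X + t \<cdot>\<^sub>m D) - F X) / t \<le> c"
    using eventually_conj[OF descent eventually_at_right_real[of 0 "1 :: real"]]
    by (rule eventually_mono) (auto simp: pos_divide_le_eq mult.commute)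
  then have "L \<le> c"
    by (rule tendsto_upperbound[OF lim]) simp
  with L c show False
    by simp
qed

theorem mainTheorem19:
  fixes A Xs :: "real mat" and m n K :: nat and \<gamma> :: real
  assumes "A \<in> carrier_mat m n"
    and "K < min m n"
    and "\<gamma> > 0"
    and "d_stationary m n (obj A K \<gamma>) Xs"
    and "\<gamma> > sqrt (real (m * n))"
  shows "trunc_nuc K Xs = 0"
proof (rule ccontr)
  assume "trunc_nuc K Xs \<noteq> 0"
  have X: "Xs \<in> carrier_mat m n"
    using assms(4) by (simp add: d_stationary_def)
  with \<open>trunc_nuc K Xs \<noteq> 0\<close> have T: "0 < trunc_nuc K Xs"
    using trunc_nuc_nonneg by (simp add: order_less_le)
  obtain D where D: "D \<in> carrier_mat m n"
    and l1D: "l1_norm_mat D \<le> sqrt (real (m * n)) * trunc_nuc K Xs"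
    and shrink: "\<And>t. 0 \<le> t \<Longrightarrow> t \<le> 1 \<Longrightarrow> trunc_nuc K (Xs + t \<cdot>\<^sub>m D) = (1 - t) * trunc_nuc K Xs"
    using tail_shrinking_direction[OF X, where K = K] by blast
  have "l1_norm_mat D - \<gamma> * trunc_nuc K Xs < 0"
    using l1D mult_strict_right_mono[OF assms(5) T] by simp
  moreover have "\<forall>\<^sub>F t in at_right 0.
      obj A K \<gamma> (Xs + t \<cdot>\<^sub>m D) - obj A K \<gamma> Xs \<le> t * (l1_norm_mat D - \<gamma> * trunc_nuc K Xs)"
    using eventually_at_right_real[OF zero_less_one_class.zero_less_one]
    by (rule eventually_mono) (auto intro!: obj_add_smult_diff_le[OF assms(1) X D] shrink)
  ultimately show False
    using not_d_stationary_of_descent[OF D] assms(4) by blast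
qed

end
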